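(* With the notation below, \[ \frac{J_{30}^3}{\overline{J}_{0,5}}\cdot \frac{J_{3,6}}{J_{3,30}} - 2\cdot \frac{J_{6,60}\overline{J}_{5,30}\overline{J}_{10,30}}{\overline{J}_{0,5}\overline{J}_{0,30}\overline{J}_{3,30}}\cdot \frac{J_{6}J_{60}}{J_{30}^4} \cdot J_{9,30}J_{21,30}J_{15,30}J_{5,30} =0, \] and \[ 4\cdot \frac{J_{6,60}\overline{J}_{5,30}\overline{J}_{10,30}}{\overline{J}_{0,5}\overline{J}_{0,30}\overline{J}_{3,30}} \cdot \frac{J_{6}J_{60}}{J_{30}^4} \cdot J_{16,30}J_{20,30}J_{26,30} J_{10,30} =J_{4,10}J_{3,15}. \]
   Context: Let $q=e^{2\pi i\tau}$ with $\operatorname{Im}\tau>0$. For $x\in\mathbb{C}^*$, $j(x;q):=\sum_{n\in\mathbb{Z}}(-1)^nq^{n(n-1)/2}x^n=(x;q)_\infty(q/x;q)_\infty(q;q)_\infty$. For integers $a$ and positive integers $m$: $J_{a,m}:=j(q^a;q^m)$, $\overline{J}_{a,m}:=j(-q^a;q^m)$, and $J_m:=\prod_{i\ge1}(1-q^{mi})$. *)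

theory Defs
  imports "HOL-Analysis.Analysis"
begin

definition jtheta :: "complex \<Rightarrow> complex \<Rightarrow> complex" where
  "jtheta x q = (\<Sum>\<^sub>\<infinity>n::int. (-1) powi n * q ^ nat (n * (n - 1) div 2) * x powi n)"

definition Jam :: "complex \<Rightarrow> int \<Rightarrow> nat \<Rightarrow> complex" where
  "Jam q a m = jtheta (q powi a) (q ^ m)"

definition Jbar :: "complex \<Rightarrow> int \<Rightarrow> nat \<Rightarrow> complex" where
  "Jbar q a m = jtheta (- (q powi a)) (q ^ m)"

definition Jm :: "complex \<Rightarrow> nat \<Rightarrow> complex" where
  "Jm q m = (\<Prod>i. (1 - q ^ (m * Suc i)))"

end

theory Submission
  imports Defs
begin

text \<open>
  The Jacobi triple product j(x;Q) = (x;Q)_\<infinity> (Q/x;Q)_\<infinity> (Q;Q)_\<infinity> follows from the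
  q-binomial theorem for 2N factors evaluated at z = -x/Q^N: the coefficients become central
  Gaussian binomials, which tend to 1/(Q;Q)_\<infinity> and are bounded uniformly, so Tannery's theorem
  lets N go to infinity. Consequently every J_{a,m}, Jbar_{a,m} and J_m is a product of
  (\<plusminus>q^a;q^m)_\<infinity>. Using (-y;Q)_\<infinity> = (y^2;Q^2)_\<infinity> / (y;Q)_\<infinity> and splitting each
  (q^a;q^m)_\<infinity> with m dividing 120 into residue classes modulo 120, all factors in the
  theorem become integer powers of the (q^r;q^120)_\<infinity>, 1 \<le> r \<le> 120, up to the factor 2
  in Jbar_{0,m} = 2 (-q^m;q^m)_\<infinity>^2 (q^m;q^m)_\<infinity>. After clearing denominators both
  identities therefore reduce to equalities of exponent vectors, which are checked by evaluation.
\<close>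

section \<open>Gaussian binomial coefficients\<close>

lemma triangle_Suc: "Suc n * n div 2 = n * (n - 1) div 2 + n"
  by (cases n) (simp_all add: algebra_simps)

lemma int_triangle: "2 * int (k * (k - 1) div 2) = int k * (int k - 1)"
proof -
  have "even (k * (k - 1))" by (cases k) auto
  then have "2 * int (k * (k - 1) div 2) = int (k * (k - 1))"
    by (metis dvd_mult_div_cancel of_nat_mult of_nat_numeral)
  then show ?thesis by (cases k) (simp_all add: algebra_simps)
qed

lemma power_neq_one_if_norm_less_one:
  fixes Q :: "'a::real_normed_div_algebra"
  assumes "norm Q < 1" "n > 0"
  shows "Q ^ n \<noteq> 1"
proof
  assume "Q ^ n = 1"
  then have "norm Q ^ n = 1" by (metis norm_one norm_power)
  moreover have "norm Q ^ n < 1" using assms by (simp add: power_less_one_iff)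
  ultimately show False by simp
qed

definition q_factorial :: "'a::comm_ring_1 \<Rightarrow> nat \<Rightarrow> 'a" where
  "q_factorial Q n = (\<Prod>i<n. 1 - Q ^ Suc i)"

lemma q_factorial_0 [simp]: "q_factorial Q 0 = 1"
  by (simp add: q_factorial_def)

lemma q_factorial_Suc: "q_factorial Q (Suc n) = q_factorial Q n * (1 - Q ^ Suc n)"
  by (simp add: q_factorial_def)

lemma q_factorial_nonzero:
  fixes Q :: "'a::real_normed_field"
  shows "norm Q < 1 \<Longrightarrow> q_factorial Q n \<noteq> 0"
  using power_neq_one_if_norm_less_one by (force simp: q_factorial_def)

lemma q_factorial_pos: "0 \<le> r \<Longrightarrow> r < 1 \<Longrightarrow> 0 < q_factorial (r::real) n"
  unfolding q_factorial_def by (intro prod_pos) (simp add: power_less_one_iff del: power_Suc)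

definition gauss_binomial :: "'a::field \<Rightarrow> nat \<Rightarrow> nat \<Rightarrow> 'a" where
  "gauss_binomial Q M k =
     (if k \<le> M then q_factorial Q M / (q_factorial Q k * q_factorial Q (M - k)) else 0)"

lemma gauss_binomial_0 [simp]:
  fixes Q :: "'a::real_normed_field"
  shows "norm Q < 1 \<Longrightarrow> gauss_binomial Q M 0 = 1"
  using q_factorial_nonzero by (simp add: gauss_binomial_def)

lemma gauss_binomial_eq_0 [simp]: "M < k \<Longrightarrow> gauss_binomial Q M k = 0"
  by (simp add: gauss_binomial_def)

lemma gauss_binomial_symmetric: "k \<le> M \<Longrightarrow> gauss_binomial Q M (M - k) = gauss_binomial Q M k"
  by (simp add: gauss_binomial_def mult.commute)

lemma gauss_binomial_Suc_Suc:
  fixes Q :: "'a::real_normed_field"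
  assumes Q: "norm Q < 1"
  shows "gauss_binomial Q (Suc M) (Suc k) = gauss_binomial Q M k + Q ^ Suc k * gauss_binomial Q M (Suc k)"
proof (cases "Suc k \<le> M")
  case True
  define d where "d = M - Suc k"
  define a where "a = Q ^ Suc k"
  define b where "b = Q ^ Suc d"
  have Mk: "M - k = Suc d" and "Suc M = Suc k + Suc d"
    using True by (simp_all add: d_def)
  then have "Q ^ Suc M = a * b"
    by (simp only: a_def b_def power_add)
  \<comment> \<open>with u = 1 - a and v = 1 - b the recurrence reads 1 - a b = u + a v after clearing denominators\<close>
  define u v where "u = 1 - a" and "v = 1 - b"
  have lhs: "gauss_binomial Q (Suc M) (Suc k)
      = q_factorial Q M * (1 - a * b) / (q_factorial Q k * u * (q_factorial Q d * v))"
    using True \<open>Q ^ Suc M = a * b\<close>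
    by (simp add: gauss_binomial_def q_factorial_Suc Mk a_def b_def u_def v_def del: power_Suc)
  have rhs: "gauss_binomial Q M k = q_factorial Q M / (q_factorial Q k * (q_factorial Q d * v))"
    "gauss_binomial Q M (Suc k) = q_factorial Q M / (q_factorial Q k * u * q_factorial Q d)"
    using True by (simp_all add: gauss_binomial_def q_factorial_Suc Mk a_def b_def u_def v_def d_def
        del: power_Suc)
  have "q_factorial Q k \<noteq> 0" "q_factorial Q d \<noteq> 0" "u \<noteq> 0" "v \<noteq> 0"
    using q_factorial_nonzero[OF Q] power_neq_one_if_norm_less_one[OF Q]
    by (auto simp: a_def b_def u_def v_def simp del: power_Suc)
  moreover have ab: "a = 1 - u" "b = 1 - v"
    by (simp_all add: u_def v_def)
  ultimately show ?thesis
    unfolding a_def[symmetric] lhs rhs ab by (simp add: field_simps)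
next
  case False
  then show ?thesis
    using q_factorial_nonzero[OF Q] by (cases "k = M") (simp_all add: gauss_binomial_def)
qed

theorem q_binomial_theorem:
  fixes Q z :: "'a::real_normed_field"
  assumes Q: "norm Q < 1"
  shows "(\<Prod>i<M. 1 + z * Q ^ i) = (\<Sum>j\<le>M. gauss_binomial Q M j * Q ^ (j * (j - 1) div 2) * z ^ j)"
proof (induction M arbitrary: z)
  case 0
  then show ?case using Q by simp
next
  case (Suc M)
  define c where "c j = gauss_binomial Q M j * Q ^ (Suc j * j div 2) * z ^ j" for j
  have "(\<Prod>i<Suc M. 1 + z * Q ^ i) = (1 + z) * (\<Prod>i<M. 1 + (z * Q) * Q ^ i)"
    by (subst prod.lessThan_Suc_shift) (simp add: mult_ac)
  also have "(\<Prod>i<M. 1 + (z * Q) * Q ^ i) = (\<Sum>j\<le>M. c j)"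
    unfolding Suc.IH c_def triangle_Suc by (simp add: power_add power_mult_distrib mult_ac)
  finally have lhs: "(\<Prod>i<Suc M. 1 + z * Q ^ i) = (1 + z) * (\<Sum>j\<le>M. c j)" .
  have pow: "Q ^ Suc k * Q ^ (Suc k * k div 2) = Q ^ (Suc (Suc k) * Suc k div 2)" for k
  proof -
    have "Suc (Suc k) * Suc k div 2 = Suc k * k div 2 + Suc k"
      using triangle_Suc[of "Suc k"] by simp
    then show ?thesis by (simp only: power_add) (rule mult.commute)
  qed
  have step: "gauss_binomial Q (Suc M) (Suc k) * Q ^ (Suc k * (Suc k - 1) div 2) * z ^ Suc k
      = z * c k + c (Suc k)" for k
    unfolding gauss_binomial_Suc_Suc[OF Q] c_def diff_Suc_1 pow[symmetric] power_Suc[of z]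
    by (simp add: algebra_simps del: power_Suc)
  have shift: "(\<Sum>k\<le>M. c (Suc k)) = (\<Sum>k\<le>M. c k) - 1"
    using sum.atMost_Suc_shift[of c M] Q by (simp add: c_def)
  have "(\<Sum>j\<le>Suc M. gauss_binomial Q (Suc M) j * Q ^ (j * (j - 1) div 2) * z ^ j)
      = 1 + z * (\<Sum>k\<le>M. c k) + (\<Sum>k\<le>M. c (Suc k))"
    using Q by (simp only: sum.atMost_Suc_shift step) (simp add: sum.distrib sum_distrib_left)
  then show ?case
    unfolding lhs shift by (simp add: algebra_simps)
qed

lemma norm_gauss_binomial_le:
  fixes Q :: "'a::real_normed_field"
  assumes Q: "norm Q < 1"
  shows "norm (gauss_binomial Q M k) \<le> 1 / q_factorial (norm Q) k"
proof (induction M arbitrary: k)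
  case 0
  then show ?case
    using q_factorial_pos[of "norm Q" k] Q by (cases k) (auto simp: gauss_binomial_def)
next
  case (Suc M)
  show ?case
  proof (cases k)
    case 0
    then show ?thesis using Q by simp
  next
    case (Suc k')
    define r where "r = norm Q"
    have r: "0 \<le> r" "r < 1" "r ^ Suc k' < 1"
      using Q by (auto simp: r_def power_less_one_iff simp del: power_Suc)
    have "norm (gauss_binomial Q (Suc M) k)
        \<le> norm (gauss_binomial Q M k') + r ^ Suc k' * norm (gauss_binomial Q M k)"
      unfolding Suc gauss_binomial_Suc_Suc[OF Q] r_def
      by (metis norm_mult norm_power norm_triangle_ineq)
    also have "\<dots> \<le> 1 / q_factorial r k' + r ^ Suc k' * (1 / q_factorial r k)"
      using Suc.IH r(1) unfolding r_def by (intro add_mono mult_left_mono) auto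
    also have "\<dots> = 1 / q_factorial r k"
      using q_factorial_pos[OF r(1,2), of k'] r(3)
      by (simp add: Suc q_factorial_Suc field_simps del: power_Suc)
    finally show ?thesis by (simp add: r_def)
  qed
qed

section \<open>Infinite q-Pochhammer symbols\<close>

definition qpochhammer_inf :: "'a::{real_normed_field,banach} \<Rightarrow> 'a \<Rightarrow> 'a" where
  "qpochhammer_inf a Q = (\<Prod>i. 1 - a * Q ^ i)"

lemma summable_norm_mult_power:
  fixes Q :: "'a::real_normed_field"
  shows "norm Q < 1 \<Longrightarrow> summable (\<lambda>i. norm (a * Q ^ i))"
  by (simp add: norm_mult norm_power summable_mult summable_geometric)

lemma convergent_prod_qpochhammer:
  fixes Q :: "'a::{real_normed_field,banach}"
  assumes "norm Q < 1"
  shows "convergent_prod (\<lambda>i. 1 - a * Q ^ i)"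
  by (intro abs_convergent_prod_imp_convergent_prod summable_imp_abs_convergent_prod)
     (use summable_norm_mult_power[OF assms] in simp)

lemma qpochhammer_inf_LIMSEQ:
  fixes Q :: "'a::{real_normed_field,banach}"
  assumes "norm Q < 1"
  shows "(\<lambda>n. \<Prod>i<n. 1 - a * Q ^ i) \<longlonglongrightarrow> qpochhammer_inf a Q"
  using convergent_prod_LIMSEQ[OF convergent_prod_qpochhammer[OF assms]]
  by (simp add: qpochhammer_inf_def LIMSEQ_lessThan_iff_atMost)

lemma qpochhammer_inf_nonzero:
  fixes Q :: "'a::{real_normed_field,banach}"
  shows "norm Q < 1 \<Longrightarrow> (\<And>i. a * Q ^ i \<noteq> 1) \<Longrightarrow> qpochhammer_inf a Q \<noteq> 0"
  unfolding qpochhammer_inf_def by (rule prodinf_nonzero[OF convergent_prod_qpochhammer]) auto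

lemma qpochhammer_inf_unfold:
  fixes Q :: "'a::{real_normed_field,banach}"
  assumes "norm Q < 1"
  shows "qpochhammer_inf a Q = (1 - a) * qpochhammer_inf (a * Q) Q"
proof -
  have "(\<lambda>i. 1 - a * Q ^ i) has_prod ((1 - a) * (\<Prod>i. 1 - a * Q ^ (i + 1)))"
    using has_prod_ignore_initial_segment'[OF convergent_prod_qpochhammer[OF assms, of a], of 1]
    by (simp add: mult.assoc)
  then show ?thesis
    unfolding qpochhammer_inf_def by (simp add: has_prod_iff mult.assoc)
qed

lemma q_factorial_LIMSEQ:
  fixes Q :: "'a::{real_normed_field,banach}"
  shows "norm Q < 1 \<Longrightarrow> q_factorial Q \<longlonglongrightarrow> qpochhammer_inf Q Q"
  using qpochhammer_inf_LIMSEQ[of Q Q] by (simp add: q_factorial_def[abs_def])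

lemma qpochhammer_inf_self_nonzero:
  fixes Q :: "'a::{real_normed_field,banach}"
  assumes "norm Q < 1"
  shows "qpochhammer_inf Q Q \<noteq> 0"
  by (intro qpochhammer_inf_nonzero[OF assms])
     (metis power_Suc power_neq_one_if_norm_less_one[OF assms] zero_less_Suc)

lemma qpochhammer_inf_self_bounds:
  fixes r :: real
  assumes "0 \<le> r" "r < 1"
  shows "0 < qpochhammer_inf r r" "qpochhammer_inf r r \<le> q_factorial r k"
proof -
  have "decseq (q_factorial r)"
    using q_factorial_pos[OF assms] assms
    by (intro decseq_SucI) (simp add: q_factorial_Suc mult_left_le)
  then show "qpochhammer_inf r r \<le> q_factorial r k"
    using decseq_ge[OF _ q_factorial_LIMSEQ[of r]] assms by simp
  show "0 < qpochhammer_inf r r"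
    unfolding qpochhammer_inf_def using assms
    by (intro less_0_prodinf convergent_prod_qpochhammer)
       (auto simp: power_less_one_iff simp flip: power_Suc)
qed

lemma gauss_binomial_central_LIMSEQ:
  fixes Q :: "'a::{real_normed_field,banach}"
  assumes Q: "norm Q < 1"
  shows "(\<lambda>N. gauss_binomial Q (2 * N) (N + d)) \<longlonglongrightarrow> 1 / qpochhammer_inf Q Q"
proof (rule LIMSEQ_offset[where k = d])
  define P where "P = qpochhammer_inf Q Q"
  have P: "P \<noteq> 0" using qpochhammer_inf_self_nonzero[OF Q] by (simp add: P_def)
  have sub: "(\<lambda>n. q_factorial Q (f n)) \<longlonglongrightarrow> P" if "strict_mono f" for f
    using LIMSEQ_subseq_LIMSEQ[OF q_factorial_LIMSEQ[OF Q] that] by (simp add: o_def P_def)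
  have "gauss_binomial Q (2 * (n + d)) (n + d + d)
      = q_factorial Q (2 * n + 2 * d) / (q_factorial Q (n + 2 * d) * q_factorial Q n)" for n
    by (simp add: gauss_binomial_def mult_2 add_ac)
  moreover have "(\<lambda>n. q_factorial Q (2 * n + 2 * d) / (q_factorial Q (n + 2 * d) * q_factorial Q n))
      \<longlonglongrightarrow> P / (P * P)"
    by (intro tendsto_intros sub) (auto simp: strict_mono_def P)
  ultimately show "(\<lambda>n. gauss_binomial Q (2 * (n + d)) (n + d + d)) \<longlonglongrightarrow> 1 / qpochhammer_inf Q Q"
    using P by (simp add: P_def)
qed

lemma norm_gauss_binomial_le_qpochhammer:
  fixes Q :: "'a::{real_normed_field,banach}"
  assumes "norm Q < 1"
  shows "norm (gauss_binomial Q M k) \<le> 1 / qpochhammer_inf (norm Q) (norm Q)"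
proof -
  have "0 < qpochhammer_inf (norm Q) (norm Q)" "qpochhammer_inf (norm Q) (norm Q) \<le> q_factorial (norm Q) k"
    using qpochhammer_inf_self_bounds[of "norm Q"] assms by simp_all
  then have "1 / q_factorial (norm Q) k \<le> 1 / qpochhammer_inf (norm Q) (norm Q)"
    by (simp add: frac_le)
  then show ?thesis
    using norm_gauss_binomial_le[OF assms, of M k] by linarith
qed

section \<open>The Jacobi triple product\<close>

lemma summable_power_triangle:
  fixes r c :: real
  assumes r: "0 \<le> r" "r < 1" and c: "0 \<le> c"
  shows "summable (\<lambda>k. r ^ (k * (k - 1) div 2) * c ^ k)"
proof -
  define f where "f k = r ^ (k * (k - 1) div 2) * c ^ k" for k
  have "(\<lambda>n. r ^ n * c) \<longlonglongrightarrow> 0"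
    by (intro tendsto_mult_left_zero LIMSEQ_power_zero) (use r in auto)
  then have "eventually (\<lambda>n. r ^ n * c < 1 / 2) sequentially"
    by (rule order_tendstoD) simp
  then obtain N where N: "\<And>n. n \<ge> N \<Longrightarrow> r ^ n * c < 1 / 2"
    by (auto simp: eventually_sequentially)
  have f_Suc: "f (Suc n) = f n * (r ^ n * c)" for n
    unfolding f_def diff_Suc_1 triangle_Suc by (simp add: power_add mult_ac)
  have "norm (f (Suc n)) \<le> 1 / 2 * norm (f n)" if "n \<ge> N" for n
  proof -
    have "0 \<le> f n" using r c by (simp add: f_def)
    then have "f n * (r ^ n * c) \<le> f n * (1 / 2)"
      using N[OF that] by (intro mult_left_mono) simp_all
    then show ?thesis
      using \<open>0 \<le> f n\<close> r c by (simp add: f_Suc mult.commute[of "1 / 2"])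
  qed
  then have "summable f"
    by (intro summable_ratio_test[of "1 / 2" N]) auto
  then show ?thesis
    unfolding f_def[abs_def] .
qed

lemma has_sum_int_split:
  fixes f :: "int \<Rightarrow> 'a::banach"
  assumes nonneg: "summable (\<lambda>k. norm (f (int k)))"
      and neg: "summable (\<lambda>k. norm (f (- int k - 1)))"
  shows "(f has_sum (\<Sum>k. f (int k) + f (- int k - 1))) UNIV"
proof -
  have "(f has_sum (\<Sum>k. f (int k))) (range int)"
    using norm_summable_imp_has_sum[OF nonneg summable_sums[OF summable_norm_cancel[OF nonneg]]]
    by (subst has_sum_reindex) (auto simp: o_def)
  moreover have "(f has_sum (\<Sum>k. f (- int k - 1))) (range (\<lambda>k. - int k - 1))"
    using norm_summable_imp_has_sum[OF neg summable_sums[OF summable_norm_cancel[OF neg]]]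
    by (subst has_sum_reindex) (auto simp: o_def inj_on_def)
  moreover have "range int \<union> range (\<lambda>k. - int k - 1) = (UNIV :: int set)"
  proof -
    have "x \<in> range int \<union> range (\<lambda>k. - int k - 1)" for x :: int
    proof (cases "x \<ge> 0")
      case True
      then have "x = int (nat x)" by simp
      then show ?thesis by blast
    next
      case False
      then have "x = - int (nat (- x - 1)) - 1" by simp
      then show ?thesis by blast
    qed
    then show ?thesis by blast
  qed
  ultimately have "(f has_sum ((\<Sum>k. f (int k)) + (\<Sum>k. f (- int k - 1)))) UNIV"
    using has_sum_Un_disjoint by fastforce
  then show ?thesis
    using suminf_add[OF summable_norm_cancel[OF nonneg] summable_norm_cancel[OF neg]] by simp
qed

definition jtheta_term :: "complex \<Rightarrow> complex \<Rightarrow> int \<Rightarrow> complex" where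
  "jtheta_term x Q n = (-1) powi n * Q ^ nat (n * (n - 1) div 2) * x powi n"

lemma nat_triangle_of_nat: "nat (int k * (int k - 1) div 2) = k * (k - 1) div 2"
  using int_triangle[of k] by (metis nonzero_mult_div_cancel_left nat_int zero_neq_numeral)

lemma nat_triangle_neg: "nat ((- int k - 1) * (- int k - 1 - 1) div 2) = Suc k * k div 2 + Suc k"
proof -
  have "(- int k - 1) * (- int k - 1 - 1) = int (Suc (Suc k)) * (int (Suc (Suc k)) - 1)"
    by (simp add: algebra_simps)
  then show ?thesis
    using nat_triangle_of_nat[of "Suc (Suc k)"] triangle_Suc[of "Suc k"] by simp
qed

lemma norm_jtheta_term_of_nat:
  "norm (jtheta_term x Q (int k)) = norm Q ^ (k * (k - 1) div 2) * norm x ^ k"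
  unfolding jtheta_term_def nat_triangle_of_nat by (simp add: norm_mult norm_power)

lemma norm_jtheta_term_neg:
  assumes "x \<noteq> 0"
  shows "norm (jtheta_term x Q (- int k - 1)) = norm Q ^ (Suc k * k div 2) * (norm Q / norm x) ^ Suc k"
proof -
  have "- int k - 1 = - int (Suc k)" by simp
  then have "x powi (- int k - 1) = inverse (x ^ Suc k)"
    by (simp only: power_int_minus power_int_of_nat)
  then show ?thesis
    unfolding jtheta_term_def nat_triangle_neg using assms
    by (simp add: norm_mult norm_power norm_inverse norm_power_int divide_inverse
        power_mult_distrib power_inverse) (simp add: power_add mult_ac)
qed

lemma summable_norm_jtheta_term_of_nat:
  "norm Q < 1 \<Longrightarrow> summable (\<lambda>k. norm (jtheta_term x Q (int k)))"
  unfolding norm_jtheta_term_of_nat by (rule summable_power_triangle) auto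

lemma summable_norm_jtheta_term_neg:
  assumes "norm Q < 1" "x \<noteq> 0"
  shows "summable (\<lambda>k. norm (jtheta_term x Q (- int k - 1)))"
proof -
  have "summable (\<lambda>k. norm Q ^ (Suc k * (Suc k - 1) div 2) * (norm Q / norm x) ^ Suc k)"
    by (rule summable_Suc_iff[THEN iffD2], rule summable_power_triangle) (use assms(1) in auto)
  then show ?thesis
    unfolding norm_jtheta_term_neg[OF assms(2)] by simp
qed

lemma jtheta_eq_suminf:
  assumes "norm Q < 1" "x \<noteq> 0"
  shows "jtheta x Q = (\<Sum>k. jtheta_term x Q (int k) + jtheta_term x Q (- int k - 1))"
  using has_sum_int_split[OF summable_norm_jtheta_term_of_nat summable_norm_jtheta_term_neg[OF assms]]
    assms(1)
  by (simp add: jtheta_def jtheta_term_def[abs_def] infsumI)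

lemma prod_lessThan_add: "(\<Prod>i<N + M. f i) = (\<Prod>i<N. f i) * (\<Prod>i<M. f (N + i))"
  for f :: "nat \<Rightarrow> 'a::comm_monoid_mult"
  by (induction M) (simp_all add: mult_ac)

lemma sum_lessThan_add: "(\<Sum>i<N + M. f i) = (\<Sum>i<N. f i) + (\<Sum>i<M. f (N + i))"
  for f :: "nat \<Rightarrow> 'a::comm_monoid_add"
  by (induction M) (simp_all add: add_ac)

lemma prod_power_Suc_lessThan: "(\<Prod>i<N. Q ^ Suc i) = Q ^ (Suc N * N div 2)"
proof (induction N)
  case (Suc N)
  have "Suc (Suc N) * Suc N div 2 = Suc N * N div 2 + Suc N"
    using triangle_Suc[of "Suc N"] by simp
  then show ?case
    using Suc.IH by (simp only: prod.lessThan_Suc power_add)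
qed simp

lemma q_binomial_term_shifted:
  fixes Q x :: complex
  assumes Q: "Q \<noteq> 0" and x: "x \<noteq> 0"
  shows "Q ^ (Suc N * N div 2) / (-x) ^ N * (Q ^ (j * (j - 1) div 2) * (-x / Q ^ N) ^ j)
        = jtheta_term x Q (int j - int N)"
proof -
  define S T n where "S = Suc N * N div 2" and "T = j * (j - 1) div 2" and "n = int j - int N"
  define e where "e = int S + int T - int N * int j"
  have "2 * e = n * (n - 1)"
    using int_triangle[of "Suc N"] int_triangle[of j]
    unfolding e_def n_def S_def T_def by (simp add: algebra_simps)
  moreover have "n * (n - 1) \<ge> 0"
    by (cases "n \<ge> 1") (auto simp: mult_nonpos_nonpos)
  ultimately have e: "e = n * (n - 1) div 2" "e \<ge> 0"
    by simp_all
  have "Q ^ S / (-x) ^ N * (Q ^ T * (-x / Q ^ N) ^ j) = (Q ^ S * Q ^ T / Q ^ (N * j)) * ((-x) ^ j / (-x) ^ N)"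
    using Q x by (simp add: power_divide power_mult power_minus' field_simps)
  also have "Q ^ S * Q ^ T / Q ^ (N * j) = Q powi e"
    unfolding e_def using Q by (simp add: power_int_diff power_int_add flip: power_int_of_nat)
  also have "(-x) ^ j / (-x) ^ N = (-x) powi n"
    unfolding n_def using x by (simp add: power_int_diff)
  also have "\<dots> = (-1) powi n * x powi n"
    by (metis mult_minus1 power_int_mult_distrib)
  also have "Q powi e = Q ^ nat (n * (n - 1) div 2)"
    using e by (metis int_nat_eq power_int_of_nat)
  finally show ?thesis
    unfolding jtheta_term_def S_def T_def n_def by (simp add: mult_ac)
qed

definition finite_jtp_term :: "complex \<Rightarrow> complex \<Rightarrow> nat \<Rightarrow> nat \<Rightarrow> complex" where
  "finite_jtp_term x Q N k =
     gauss_binomial Q (2 * N) (N + k) * jtheta_term x Q (int k)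
     + gauss_binomial Q (2 * N) (N + k + 1) * jtheta_term x Q (- int k - 1)"

lemma q_binomial_product_shifted:
  fixes Q x :: complex
  assumes Q: "Q \<noteq> 0" and x: "x \<noteq> 0"
  shows "(\<Prod>i<2 * N. 1 + (-x / Q ^ N) * Q ^ i)
      = (-x) ^ N / Q ^ (Suc N * N div 2) * ((\<Prod>i<N. 1 - x * Q ^ i) * (\<Prod>i<N. 1 - Q ^ Suc i / x))"
proof -
  define f where "f i = 1 + (-x / Q ^ N) * Q ^ i" for i
  have upper: "f (N + i) = 1 - x * Q ^ i" for i
    using Q by (simp add: f_def power_add)
  have lower: "f (N - Suc i) = (-x) / Q ^ Suc i * (1 - Q ^ Suc i / x)" if "i < N" for i
  proof -
    have "N - Suc i + Suc i = N"
      using that by simp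
    then have "Q ^ N = Q ^ (N - Suc i) * Q ^ Suc i"
      by (metis power_add)
    then show ?thesis using Q x by (simp add: f_def field_simps)
  qed
  have "(\<Prod>i<N. f i) = (\<Prod>i<N. f (N - Suc i))"
    by (rule prod.nat_diff_reindex[symmetric])
  also have "\<dots> = (\<Prod>i<N. (-x) / Q ^ Suc i * (1 - Q ^ Suc i / x))"
    by (rule prod.cong) (simp_all add: lower)
  also have "\<dots> = (\<Prod>i<N. (-x) / Q ^ Suc i) * (\<Prod>i<N. 1 - Q ^ Suc i / x)"
    by (rule prod.distrib)
  also have "(\<Prod>i<N. (-x) / Q ^ Suc i) = (-x) ^ N / Q ^ (Suc N * N div 2)"
    unfolding prod_dividef prod_power_Suc_lessThan by simp
  finally have lower_half: "(\<Prod>i<N. f i) = (-x) ^ N / Q ^ (Suc N * N div 2) * (\<Prod>i<N. 1 - Q ^ Suc i / x)" .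
  have "(\<Prod>i<2 * N. 1 + (-x / Q ^ N) * Q ^ i) = (\<Prod>i<N + N. f i)"
    by (simp add: f_def mult_2)
  also have "\<dots> = (\<Prod>i<N. f i) * (\<Prod>i<N. f (N + i))"
    by (rule prod_lessThan_add)
  finally show ?thesis
    by (simp add: lower_half upper mult_ac)
qed

theorem finite_jacobi_triple_product:
  fixes Q x :: complex
  assumes Qn: "norm Q < 1" and Q: "Q \<noteq> 0" and x: "x \<noteq> 0"
  shows "(\<Prod>i<N. 1 - x * Q ^ i) * (\<Prod>i<N. 1 - Q ^ Suc i / x) = (\<Sum>k\<le>N. finite_jtp_term x Q N k)"
proof -
  define h where "h j = gauss_binomial Q (2 * N) j * jtheta_term x Q (int j - int N)" for j
  have "(\<Prod>i<N. 1 - x * Q ^ i) * (\<Prod>i<N. 1 - Q ^ Suc i / x)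
      = Q ^ (Suc N * N div 2) / (-x) ^ N * (\<Prod>i<2 * N. 1 + (-x / Q ^ N) * Q ^ i)"
    unfolding q_binomial_product_shifted[OF Q x] using Q x by simp
  also have "\<dots> = (\<Sum>j\<le>2 * N. h j)"
    unfolding q_binomial_theorem[OF Qn] sum_distrib_left h_def q_binomial_term_shifted[OF Q x, symmetric]
    by (simp add: mult_ac)
  also have "\<dots> = (\<Sum>j<N. h j) + (\<Sum>k<Suc N. h (N + k))"
  proof -
    have "{..2 * N} = {..<N + Suc N}" by auto
    then show ?thesis by (simp only: sum_lessThan_add)
  qed
  also have "(\<Sum>j<N. h j) = (\<Sum>k<N. h (N - Suc k))"
    by (rule sum.nat_diff_reindex[symmetric])
  also have "\<dots> = (\<Sum>k\<le>N. gauss_binomial Q (2 * N) (N + k + 1) * jtheta_term x Q (- int k - 1))"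
  proof -
    have "h (N - Suc k) = gauss_binomial Q (2 * N) (N + k + 1) * jtheta_term x Q (- int k - 1)"
      if "k < N" for k
    proof -
      have "gauss_binomial Q (2 * N) (N - Suc k) = gauss_binomial Q (2 * N) (N + k + 1)"
        using gauss_binomial_symmetric[of "N + k + 1" "2 * N" Q] that by (simp add: mult_2)
      moreover have "int (N - Suc k) - int N = - int k - 1"
        using that by simp
      ultimately show ?thesis
        by (simp only: h_def)
    qed
    then show ?thesis
      by (simp add: lessThan_Suc_atMost[symmetric])
  qed
  finally show ?thesis
    by (simp add: finite_jtp_term_def h_def sum.distrib lessThan_Suc_atMost add.commute)
qed

lemma finite_jtp_sum_LIMSEQ:
  fixes Q x :: complex
  assumes Qn: "norm Q < 1" and x: "x \<noteq> 0"
  shows "(\<lambda>N. \<Sum>k. finite_jtp_term x Q N k) \<longlonglongrightarrow> jtheta x Q / qpochhammer_inf Q Q"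
proof -
  define P where "P = qpochhammer_inf Q Q"
  define t where "t k = jtheta_term x Q (int k) + jtheta_term x Q (- int k - 1)" for k
  define K where "K = 1 / qpochhammer_inf (norm Q) (norm Q)"
  define g where "g k = norm (jtheta_term x Q (int k)) + norm (jtheta_term x Q (- int k - 1))" for k
  have "(\<lambda>N. \<Sum>k. finite_jtp_term x Q N k) \<longlonglongrightarrow> (\<Sum>k. t k / P)"
  proof (rule tannerys_theorem[where M = "\<lambda>k. K * g k", THEN conjunct2, THEN conjunct2])
    show "(\<lambda>N. finite_jtp_term x Q N k) \<longlonglongrightarrow> t k / P" for k
    proof -
      have "(\<lambda>N. gauss_binomial Q (2 * N) (N + k) * jtheta_term x Q (int k)
          + gauss_binomial Q (2 * N) (N + (k + 1)) * jtheta_term x Q (- int k - 1))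
          \<longlonglongrightarrow> 1 / P * jtheta_term x Q (int k) + 1 / P * jtheta_term x Q (- int k - 1)"
        unfolding P_def
        by (intro tendsto_add tendsto_mult_right gauss_binomial_central_LIMSEQ[OF Qn])
      then show ?thesis
        by (simp add: finite_jtp_term_def t_def add_divide_distrib add.assoc)
    qed
    show "\<forall>\<^sub>F (k, N) in at_top \<times>\<^sub>F sequentially. norm (finite_jtp_term x Q N k) \<le> K * g k"
    proof (rule always_eventually, clarify)
      fix k N
      have K: "norm (gauss_binomial Q M j) \<le> K" for M j
        unfolding K_def by (rule norm_gauss_binomial_le_qpochhammer[OF Qn])
      show "norm (finite_jtp_term x Q N k) \<le> K * g k"
        unfolding finite_jtp_term_def g_def distrib_left
        by (intro order_trans[OF norm_triangle_ineq] add_mono; unfold norm_mult;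
            rule mult_right_mono[OF K norm_ge_zero])
    qed
    show "summable (\<lambda>k. K * g k)"
      unfolding g_def[abs_def]
      by (intro summable_mult summable_add summable_norm_jtheta_term_of_nat[OF Qn]
          summable_norm_jtheta_term_neg[OF Qn x])
  qed simp
  also have "(\<Sum>k. t k / P) = jtheta x Q / P"
    unfolding jtheta_eq_suminf[OF Qn x] t_def
    by (intro suminf_divide summable_add summable_norm_cancel[OF summable_norm_jtheta_term_of_nat[OF Qn]]
        summable_norm_cancel[OF summable_norm_jtheta_term_neg[OF Qn x]])
  finally show ?thesis
    unfolding P_def .
qed

theorem jacobi_triple_product:
  fixes Q x :: complex
  assumes Qn: "norm Q < 1" and Q: "Q \<noteq> 0" and x: "x \<noteq> 0"
  shows "jtheta x Q = qpochhammer_inf x Q * qpochhammer_inf (Q / x) Q * qpochhammer_inf Q Q"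
proof -
  have partial: "(\<Sum>k. finite_jtp_term x Q N k)
      = (\<Prod>i<N. 1 - x * Q ^ i) * (\<Prod>i<N. 1 - Q / x * Q ^ i)" for N
  proof -
    have "(\<Sum>k. finite_jtp_term x Q N k) = (\<Sum>k\<le>N. finite_jtp_term x Q N k)"
      by (rule suminf_finite) (auto simp: finite_jtp_term_def)
    then show ?thesis
      using finite_jacobi_triple_product[OF Qn Q x, of N] by (simp add: mult.commute)
  qed
  have "(\<lambda>N. (\<Prod>i<N. 1 - x * Q ^ i) * (\<Prod>i<N. 1 - Q / x * Q ^ i))
      \<longlonglongrightarrow> qpochhammer_inf x Q * qpochhammer_inf (Q / x) Q"
    by (intro tendsto_mult qpochhammer_inf_LIMSEQ[OF Qn])
  then have "qpochhammer_inf x Q * qpochhammer_inf (Q / x) Q = jtheta x Q / qpochhammer_inf Q Q"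
    using finite_jtp_sum_LIMSEQ[OF Qn x] unfolding partial by (rule LIMSEQ_unique)
  then show ?thesis
    using qpochhammer_inf_self_nonzero[OF Qn] by (simp add: divide_eq_eq mult_ac)
qed

section \<open>Theta products as products over residue classes\<close>

lemma qpochhammer_inf_mult_neg:
  fixes Q :: "'a::{real_normed_field,banach}"
  assumes "norm Q < 1"
  shows "qpochhammer_inf a Q * qpochhammer_inf (-a) Q = qpochhammer_inf (a ^ 2) (Q ^ 2)"
proof -
  have "qpochhammer_inf a Q * qpochhammer_inf (-a) Q = (\<Prod>i. (1 - a * Q ^ i) * (1 - (-a) * Q ^ i))"
    unfolding qpochhammer_inf_def by (intro prodinf_mult convergent_prod_qpochhammer assms)
  also have "\<dots> = qpochhammer_inf (a ^ 2) (Q ^ 2)"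
    unfolding qpochhammer_inf_def
    by (intro prodinf_cong) (simp add: algebra_simps power2_eq_square power_mult_distrib)
  finally show ?thesis .
qed

lemma qpochhammer_inf_dissect:
  fixes Q :: "'a::{real_normed_field,banach}"
  assumes Q: "norm Q < 1" and k: "k > 0"
  shows "qpochhammer_inf a Q = (\<Prod>j<k. qpochhammer_inf (a * Q ^ j) (Q ^ k))"
proof -
  have Qk: "norm (Q ^ k) < 1"
    using Q k by (simp add: norm_power power_less_one_iff)
  have blocks: "(\<Prod>i<N * k. 1 - a * Q ^ i) = (\<Prod>j<k. \<Prod>i<N. 1 - a * Q ^ j * (Q ^ k) ^ i)" for N
  proof -
    have "(\<Prod>i\<in>{n * k..<n * k + k}. 1 - a * Q ^ i) = (\<Prod>j<k. 1 - a * Q ^ (j + n * k))" for n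
      using prod.shift_bounds_nat_ivl[of "\<lambda>i. 1 - a * Q ^ i" 0 "n * k" k]
      by (simp add: atLeast0LessThan add.commute)
    then have "(\<Prod>i<N * k. 1 - a * Q ^ i) = (\<Prod>n<N. \<Prod>j<k. 1 - a * Q ^ (j + n * k))"
      by (simp add: prod.nat_group[symmetric])
    also have "\<dots> = (\<Prod>j<k. \<Prod>n<N. 1 - a * Q ^ (j + n * k))"
      by (rule prod.swap)
    finally show ?thesis
      by (simp add: power_add mult.commute[of _ k] power_mult mult.assoc)
  qed
  have "(\<lambda>N. \<Prod>i<N * k. 1 - a * Q ^ i) \<longlonglongrightarrow> qpochhammer_inf a Q"
    using LIMSEQ_subseq_LIMSEQ[OF qpochhammer_inf_LIMSEQ[OF Q], of "\<lambda>N. N * k"] k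
    by (simp add: strict_mono_def o_def)
  moreover have "(\<lambda>N. \<Prod>i<N * k. 1 - a * Q ^ i) \<longlonglongrightarrow> (\<Prod>j<k. qpochhammer_inf (a * Q ^ j) (Q ^ k))"
    unfolding blocks by (intro tendsto_prod qpochhammer_inf_LIMSEQ[OF Qk])
  ultimately show ?thesis
    by (rule LIMSEQ_unique)
qed

lemma image_residue_class:
  fixes m N a :: nat
  assumes m: "m > 0" and d: "m dvd N" and a: "1 \<le> a" "a \<le> m"
  shows "(\<lambda>j. a + m * j) ` {..<N div m} = {r \<in> {1..N}. r mod m = a mod m}"
proof (intro equalityI subsetI)
  fix r assume "r \<in> (\<lambda>j. a + m * j) ` {..<N div m}"
  then obtain j where j: "j < N div m" "r = a + m * j" by auto
  then have "m * Suc j \<le> N"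
    using d by (metis Suc_leI dvd_mult_div_cancel mult_le_mono2)
  then show "r \<in> {r \<in> {1..N}. r mod m = a mod m}"
    using j a by simp
next
  fix r assume "r \<in> {r \<in> {1..N}. r mod m = a mod m}"
  then have r: "1 \<le> r" "r \<le> N" "r mod m = a mod m" by auto
  have "a \<le> r"
  proof (rule ccontr)
    assume "\<not> a \<le> r"
    then show False
      using r a by (cases "a = m") auto
  qed
  then obtain j where rj: "r = a + m * j"
    using r(3) by (metis le_add_diff_inverse mod_eq_dvd_iff_nat dvdE)
  then have "m * j < m * (N div m)"
    using d a r(2) by simp
  then show "r \<in> (\<lambda>j. a + m * j) ` {..<N div m}"
    using rj by auto
qed

lemma qpochhammer_power_residues:
  fixes q :: complex
  assumes q: "norm q < 1" and m: "m > 0" "m dvd N" and N: "N > 0" and a: "1 \<le> a" "a \<le> m"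
  shows "qpochhammer_inf (q ^ a) (q ^ m) = (\<Prod>r \<in> {r \<in> {1..N}. r mod m = a mod m}. qpochhammer_inf (q ^ r) (q ^ N))"
proof -
  have qm: "norm (q ^ m) < 1"
    using q m by (simp add: norm_power power_less_one_iff)
  have k: "N div m > 0"
    using m N by (auto elim: dvdE)
  have "qpochhammer_inf (q ^ a) (q ^ m) = (\<Prod>j<N div m. qpochhammer_inf (q ^ (a + m * j)) (q ^ N))"
    using qpochhammer_inf_dissect[OF qm k, of "q ^ a"] m
    by (simp add: power_add flip: power_mult)
  also have "\<dots> = (\<Prod>r \<in> (\<lambda>j. a + m * j) ` {..<N div m}. qpochhammer_inf (q ^ r) (q ^ N))"
    using m by (subst prod.reindex) (auto simp: inj_on_def)
  finally show ?thesis
    unfolding image_residue_class[OF m a] .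
qed

definition gen_eta_quotient :: "complex \<Rightarrow> nat \<Rightarrow> (nat \<Rightarrow> int) \<Rightarrow> complex" where
  "gen_eta_quotient q N e = (\<Prod>r\<in>{1..N}. qpochhammer_inf (q ^ r) (q ^ N) powi e r)"

definition residue_indicator :: "nat \<Rightarrow> nat \<Rightarrow> nat \<Rightarrow> int" where
  "residue_indicator m a r = (if r mod m = a mod m then 1 else 0)"

lemma qpochhammer_power_nonzero:
  fixes q :: complex
  assumes "norm q < 1" "r > 0" "N > 0"
  shows "qpochhammer_inf (q ^ r) (q ^ N) \<noteq> 0"
proof (rule qpochhammer_inf_nonzero)
  show "norm (q ^ N) < 1" using assms by (simp add: norm_power power_less_one_iff)
  show "q ^ r * (q ^ N) ^ i \<noteq> 1" for i
    using power_neq_one_if_norm_less_one[OF assms(1), of "r + N * i"] assms(2)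
    by (simp add: power_add power_mult)
qed

lemma gen_eta_quotient_nonzero: "norm q < 1 \<Longrightarrow> gen_eta_quotient q N e \<noteq> 0"
  unfolding gen_eta_quotient_def using qpochhammer_power_nonzero
  by (auto simp: prod_zero_iff power_int_0_left_if)

lemma gen_eta_quotient_mult:
  "norm q < 1 \<Longrightarrow> gen_eta_quotient q N e1 * gen_eta_quotient q N e2 = gen_eta_quotient q N (\<lambda>r. e1 r + e2 r)"
  unfolding gen_eta_quotient_def prod.distrib[symmetric]
  by (intro prod.cong refl) (simp add: power_int_add qpochhammer_power_nonzero)

lemma gen_eta_quotient_divide:
  "norm q < 1 \<Longrightarrow> gen_eta_quotient q N e1 / gen_eta_quotient q N e2 = gen_eta_quotient q N (\<lambda>r. e1 r - e2 r)"
  unfolding gen_eta_quotient_def prod_dividef[symmetric]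
  by (intro prod.cong refl) (simp add: power_int_diff qpochhammer_power_nonzero)

lemma gen_eta_quotient_power: "gen_eta_quotient q N e ^ n = gen_eta_quotient q N (\<lambda>r. int n * e r)"
  unfolding gen_eta_quotient_def prod_power_distrib
  by (intro prod.cong refl) (simp only: mult.commute[of "int n"] power_int_mult power_int_of_nat)

lemma gen_eta_quotient_cong:
  "(\<forall>r\<in>{1..N}. e1 r = e2 r) \<Longrightarrow> gen_eta_quotient q N e1 = gen_eta_quotient q N e2"
  unfolding gen_eta_quotient_def by (intro prod.cong refl) auto

lemma qpochhammer_power_eq_gen_eta_quotient:
  fixes q :: complex
  assumes "norm q < 1" "m > 0" "m dvd N" "N > 0" "1 \<le> a" "a \<le> m"
  shows "qpochhammer_inf (q ^ a) (q ^ m) = gen_eta_quotient q N (residue_indicator m a)"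
  unfolding qpochhammer_power_residues[OF assms] prod.inter_filter[OF finite_atLeastAtMost]
    gen_eta_quotient_def residue_indicator_def
  by (intro prod.cong refl) simp

lemma qpochhammer_neg_power_eq_gen_eta_quotient:
  fixes q :: complex
  assumes q: "norm q < 1" and m: "m > 0" "2 * m dvd N" and N: "N > 0" and a: "1 \<le> a" "a \<le> m"
  shows "qpochhammer_inf (- (q ^ a)) (q ^ m)
      = gen_eta_quotient q N (\<lambda>r. residue_indicator (2 * m) (2 * a) r - residue_indicator m a r)"
proof -
  have "m dvd N"
    using m(2) by (rule dvd_mult_right)
  then have eq: "qpochhammer_inf (q ^ a) (q ^ m) = gen_eta_quotient q N (residue_indicator m a)"
      "qpochhammer_inf (q ^ (2 * a)) (q ^ (2 * m)) = gen_eta_quotient q N (residue_indicator (2 * m) (2 * a))"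
    using m a N by (intro qpochhammer_power_eq_gen_eta_quotient q; simp)+
  have "norm (q ^ m) < 1"
    using q m by (simp add: norm_power power_less_one_iff)
  from qpochhammer_inf_mult_neg[OF this, of "q ^ a"]
  have "qpochhammer_inf (q ^ a) (q ^ m) * qpochhammer_inf (- (q ^ a)) (q ^ m)
      = qpochhammer_inf (q ^ (2 * a)) (q ^ (2 * m))"
    by (simp only: power_mult[symmetric] mult.commute[of _ 2])
  then have "qpochhammer_inf (- (q ^ a)) (q ^ m)
      = qpochhammer_inf (q ^ (2 * a)) (q ^ (2 * m)) / qpochhammer_inf (q ^ a) (q ^ m)"
    using gen_eta_quotient_nonzero[OF q] eq(1) by (simp add: eq_divide_eq mult.commute)
  then show ?thesis
    unfolding eq gen_eta_quotient_divide[OF q] .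
qed

lemma Jm_eq_qpochhammer: "Jm q m = qpochhammer_inf (q ^ m) (q ^ m)"
  unfolding Jm_def qpochhammer_inf_def by (intro prodinf_cong) (simp add: power_add flip: power_mult)

lemma Jam_eq_qpochhammer:
  fixes q :: complex
  assumes q: "norm q < 1" "q \<noteq> 0" and a: "0 < a" "a < m"
  shows "Jam q (int a) m
      = qpochhammer_inf (q ^ a) (q ^ m) * qpochhammer_inf (q ^ (m - a)) (q ^ m) * qpochhammer_inf (q ^ m) (q ^ m)"
proof -
  have "norm (q ^ m) < 1" "q ^ m \<noteq> 0" "q ^ a \<noteq> 0"
    using q a by (simp_all add: norm_power power_less_one_iff)
  moreover have "q ^ m / q ^ a = q ^ (m - a)"
    using q a by (simp add: power_diff)
  ultimately show ?thesis
    unfolding Jam_def power_int_of_nat by (simp add: jacobi_triple_product)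
qed

lemma Jbar_eq_qpochhammer:
  fixes q :: complex
  assumes q: "norm q < 1" "q \<noteq> 0" and a: "0 < a" "a < m"
  shows "Jbar q (int a) m = qpochhammer_inf (- (q ^ a)) (q ^ m) * qpochhammer_inf (- (q ^ (m - a))) (q ^ m)
      * qpochhammer_inf (q ^ m) (q ^ m)"
proof -
  have "norm (q ^ m) < 1" "q ^ m \<noteq> 0" "- (q ^ a) \<noteq> 0"
    using q a by (simp_all add: norm_power power_less_one_iff)
  moreover have "q ^ m / - (q ^ a) = - (q ^ (m - a))"
    using q a by (simp add: power_diff)
  ultimately show ?thesis
    unfolding Jbar_def power_int_of_nat by (simp add: jacobi_triple_product)
qed

lemma Jbar_0_eq_qpochhammer:
  fixes q :: complex
  assumes q: "norm q < 1" "q \<noteq> 0" and m: "0 < m"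
  shows "Jbar q 0 m = 2 * qpochhammer_inf (- (q ^ m)) (q ^ m) ^ 2 * qpochhammer_inf (q ^ m) (q ^ m)"
proof -
  have Q: "norm (q ^ m) < 1" "q ^ m \<noteq> 0"
    using q m by (simp_all add: norm_power power_less_one_iff)
  have "qpochhammer_inf (-1) (q ^ m) = 2 * qpochhammer_inf (- (q ^ m)) (q ^ m)"
    using qpochhammer_inf_unfold[OF Q(1), of "-1"] by simp
  then show ?thesis
    unfolding Jbar_def using Q by (simp add: jacobi_triple_product power2_eq_square)
qed

lemma Jm_eq_gen_eta_quotient:
  fixes q :: complex
  assumes "norm q < 1" "0 < m" "m dvd N" "N > 0"
  shows "Jm q m = gen_eta_quotient q N (residue_indicator m m)"
  unfolding Jm_eq_qpochhammer using assms by (intro qpochhammer_power_eq_gen_eta_quotient) auto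

lemma Jam_eq_gen_eta_quotient:
  fixes q :: complex
  assumes q: "norm q < 1" "q \<noteq> 0" and a: "0 < a" "a < int m" and N: "m dvd N" "N > 0"
  shows "Jam q a m = gen_eta_quotient q N
      (\<lambda>r. residue_indicator m (nat a) r + residue_indicator m (m - nat a) r + residue_indicator m m r)"
  using Jam_eq_qpochhammer[OF q, of "nat a" m] q a N
  by (simp add: qpochhammer_power_eq_gen_eta_quotient gen_eta_quotient_mult)

lemma Jbar_eq_gen_eta_quotient:
  fixes q :: complex
  assumes q: "norm q < 1" "q \<noteq> 0" and a: "0 < a" "a < int m" and N: "2 * m dvd N" "N > 0"
  shows "Jbar q a m = gen_eta_quotient q N
      (\<lambda>r. (residue_indicator (2 * m) (2 * nat a) r - residue_indicator m (nat a) r)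
         + (residue_indicator (2 * m) (2 * (m - nat a)) r - residue_indicator m (m - nat a) r)
         + residue_indicator m m r)"
proof -
  have "m dvd N"
    using N(1) by (rule dvd_mult_right)
  then show ?thesis
    using Jbar_eq_qpochhammer[OF q, of "nat a" m] q a N
    by (simp add: qpochhammer_power_eq_gen_eta_quotient
        qpochhammer_neg_power_eq_gen_eta_quotient gen_eta_quotient_mult)
qed

lemma Jbar_0_eq_gen_eta_quotient:
  fixes q :: complex
  assumes q: "norm q < 1" "q \<noteq> 0" and m: "0 < m" and N: "2 * m dvd N" "N > 0"
  shows "Jbar q 0 m = 2 * gen_eta_quotient q N
      (\<lambda>r. 2 * (residue_indicator (2 * m) (2 * m) r - residue_indicator m m r) + residue_indicator m m r)"
proof -
  have "m dvd N"
    using N(1) by (rule dvd_mult_right)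
  then show ?thesis
    using q m N
    by (simp add: Jbar_0_eq_qpochhammer qpochhammer_power_eq_gen_eta_quotient
        qpochhammer_neg_power_eq_gen_eta_quotient gen_eta_quotient_power gen_eta_quotient_mult)
qed

lemma Jm_nonzero: "norm q < 1 \<Longrightarrow> 0 < m \<Longrightarrow> Jm q m \<noteq> 0"
  by (simp add: Jm_eq_qpochhammer qpochhammer_power_nonzero)

lemma Jam_nonzero:
  fixes q :: complex
  assumes "norm q < 1" "q \<noteq> 0" "0 < a" "a < int m"
  shows "Jam q a m \<noteq> 0"
  using assms by (simp add: Jam_eq_gen_eta_quotient[where N = m] gen_eta_quotient_nonzero)

lemma Jbar_nonzero:
  fixes q :: complex
  assumes "norm q < 1" "q \<noteq> 0" "0 < a" "a < int m"
  shows "Jbar q a m \<noteq> 0"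
  using assms by (simp add: Jbar_eq_gen_eta_quotient[where N = "2 * m"] gen_eta_quotient_nonzero)

lemma Jbar_0_nonzero:
  fixes q :: complex
  assumes "norm q < 1" "q \<noteq> 0" "0 < m"
  shows "Jbar q 0 m \<noteq> 0"
  using assms by (simp add: Jbar_0_eq_gen_eta_quotient[where N = "2 * m"] gen_eta_quotient_nonzero)

lemma level_120_product_identities:
  fixes q :: complex
  assumes q: "norm q < 1" "q \<noteq> 0"
  shows "Jm q 30 ^ 7 * Jam q 3 6 * Jbar q 0 30 * Jbar q 3 30
      = 2 * Jam q 3 30 * Jam q 6 60 * Jbar q 5 30 * Jbar q 10 30 * Jm q 6 * Jm q 60
          * Jam q 9 30 * Jam q 21 30 * Jam q 15 30 * Jam q 5 30"
    and "4 * Jam q 6 60 * Jbar q 5 30 * Jbar q 10 30 * Jm q 6 * Jm q 60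
          * Jam q 16 30 * Jam q 20 30 * Jam q 26 30 * Jam q 10 30
      = Jam q 4 10 * Jam q 3 15 * Jbar q 0 5 * Jbar q 0 30 * Jbar q 3 30 * Jm q 30 ^ 4"
proof -
  note level_120 = Jam_eq_gen_eta_quotient[OF q, where N = 120]
    Jbar_eq_gen_eta_quotient[OF q, where N = 120] Jbar_0_eq_gen_eta_quotient[OF q, where N = 120]
    Jm_eq_gen_eta_quotient[OF q(1), where N = 120]
  note collect = gen_eta_quotient_power gen_eta_quotient_mult[OF q(1)] mult.assoc
    mult.left_commute[of "gen_eta_quotient q 120 e" 2 for e]
  note exponents_agree = gen_eta_quotient_cong[unfolded atLeastAtMost_upt list_all_iff[symmetric]]
  show "Jm q 30 ^ 7 * Jam q 3 6 * Jbar q 0 30 * Jbar q 3 30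
      = 2 * Jam q 3 30 * Jam q 6 60 * Jbar q 5 30 * Jbar q 10 30 * Jm q 6 * Jm q 60
          * Jam q 9 30 * Jam q 21 30 * Jam q 15 30 * Jam q 5 30"
    by (simp add: level_120 collect) (rule exponents_agree, code_simp)
  show "4 * Jam q 6 60 * Jbar q 5 30 * Jbar q 10 30 * Jm q 6 * Jm q 60
          * Jam q 16 30 * Jam q 20 30 * Jam q 26 30 * Jam q 10 30
      = Jam q 4 10 * Jam q 3 15 * Jbar q 0 5 * Jbar q 0 30 * Jbar q 3 30 * Jm q 30 ^ 4"
    by (simp add: level_120 collect) (rule exponents_agree, code_simp)
qed

theorem lemma2p3:
  fixes \<tau> q :: complex
  assumes "Im \<tau> > 0"
    and "q = exp (2 * of_real pi * \<i> * \<tau>)"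
  shows "((Jm q 30) ^ 3 / Jbar q 0 5 * (Jam q 3 6 / Jam q 3 30)
         - 2 * (Jam q 6 60 * Jbar q 5 30 * Jbar q 10 30
                / (Jbar q 0 5 * Jbar q 0 30 * Jbar q 3 30))
             * (Jm q 6 * Jm q 60 / (Jm q 30) ^ 4)
             * Jam q 9 30 * Jam q 21 30 * Jam q 15 30 * Jam q 5 30 = 0)
    \<and> (4 * (Jam q 6 60 * Jbar q 5 30 * Jbar q 10 30
                / (Jbar q 0 5 * Jbar q 0 30 * Jbar q 3 30))
             * (Jm q 6 * Jm q 60 / (Jm q 30) ^ 4)
             * Jam q 16 30 * Jam q 20 30 * Jam q 26 30 * Jam q 10 30
         = Jam q 4 10 * Jam q 3 15)"
proof -
  have q: "norm q < 1" "q \<noteq> 0"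
    using assms by (simp_all add: norm_exp_eq_Re)
  have "Jm q 30 \<noteq> 0" "Jbar q 0 5 \<noteq> 0" "Jbar q 0 30 \<noteq> 0" "Jbar q 3 30 \<noteq> 0" "Jam q 3 30 \<noteq> 0"
    by (simp_all add: Jm_nonzero Jam_nonzero Jbar_nonzero Jbar_0_nonzero q)
  with level_120_product_identities[OF q] show ?thesis
    by (simp add: field_simps)
qed

end
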